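(* Let $J\subset I$ be an interval and $\widetilde\Lambda_J=\{(t,s)\in J\times J:t>s\}$. The following are equivalent: (i) for every $(t,s)\in\widetilde\Lambda_J$, $G(t,s)$ is a compact operator on $C_b(\mathbb R^d)$; (ii) for every $(t,s)\in\widetilde\Lambda_J$ and every $\varepsilon>0$ there is $R>0$ with $g_{t,s}(x,\mathbb R^d\setminus B(0,R))\le\varepsilon$ for all $x\in\mathbb R^d$.
   Context: Let $d\ge1$, $\alpha\in(0,1)$, $I\subseteq\mathbb R$ either $\mathbb R$ or a right half-line. For $t\in I$, $(\mathcal A(t)\psi)(x)=\sum_{i,j}q_{ij}(t,x)D_{ij}\psi(x)+\sum_ib_i(t,x)D_i\psi(x)-c(t,x)\psi(x)$, with: $q_{ij},b_i,c\in C^{\alpha/2,\alpha}_{\rm loc}(I\times\mathbb R^d)$; $\inf c>-\infty$; $Q=(q_{ij})$ symmetric with $\langle Q(t,x)\xi,\xi\rangle\ge\eta(t,x)|\xi|^2$, $\inf\eta>0$; for every bounded interval $J'\subset I$ there are positive $\varphi\in C^2(\mathbb R^d)$ with $\varphi\to+\infty$ at infinity and $\lambda$ with $\mathcal A(t)\varphi\le\lambda\varphi$ on $J'\times\mathbb R^d$. $G(t,s)$ is the evolution operator on $C_b(\mathbb R^d)$: $G(t,s)f=u_f(t,\cdot)$, $u_f$ the unique solution (bounded on strips, in $C([s,\infty)\times\mathbb R^d)\cap C^{1+\alpha/2,2+\alpha}_{\rm loc}((s,\infty)\times\mathbb R^d)$) of $D_tu=\mathcal A(t)u$, $u(s)=f$.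 It has a positive Green function $g$ with $(G(t,s)f)(x)=\int g(t,s,x,y)f(y)dy$, and $g_{t,s}(x,A):=\int_Ag(t,s,x,y)dy$ for Borel $A$, $t>s$. *)

theory Defs
  imports "HOL-Analysis.Analysis"
begin

definition pdx :: "'n::finite \<Rightarrow> (real^'n \<Rightarrow> real) \<Rightarrow> real^'n \<Rightarrow> real" where
  "pdx i f x = deriv (\<lambda>h. f (x + h *\<^sub>R axis i 1)) 0"

definition pdt :: "(real \<Rightarrow> real^'n \<Rightarrow> real) \<Rightarrow> real \<Rightarrow> real^'n \<Rightarrow> real" where
  "pdt u t x = deriv (\<lambda>\<tau>. u \<tau> x) t"

definition holder_loc :: "real \<Rightarrow> (real \<times> (real^'n)) set \<Rightarrow> (real \<Rightarrow> real^'n \<Rightarrow> real) \<Rightarrow> bool" where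
  "holder_loc \<alpha> S f \<longleftrightarrow> continuous_on S (\<lambda>(t,x). f t x) \<and>
     (\<forall>K. compact K \<and> K \<subseteq> S \<longrightarrow>
        (\<exists>C. \<forall>t x s y. (t,x) \<in> K \<and> (s,y) \<in> K \<longrightarrow>
             \<bar>f t x - f s y\<bar> \<le> C * (\<bar>t - s\<bar> powr (\<alpha>/2) + norm (x - y) powr \<alpha>)))"

definition C2 :: "(real^'n::finite \<Rightarrow> real) \<Rightarrow> bool" where
  "C2 f \<longleftrightarrow> continuous_on UNIV f \<and>
     (\<forall>i x. (\<lambda>h. f (x + h *\<^sub>R axis i 1)) field_differentiable (at 0)) \<and>
     (\<forall>i. continuous_on UNIV (pdx i f)) \<and>
     (\<forall>i j x. (\<lambda>h. pdx i f (x + h *\<^sub>R axis j 1)) field_differentiable (at 0)) \<and>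
     (\<forall>i j. continuous_on UNIV (pdx j (pdx i f)))"

definition Aop :: "(real \<Rightarrow> real^'n \<Rightarrow> real^'n^'n) \<Rightarrow> (real \<Rightarrow> real^'n \<Rightarrow> real^'n)
     \<Rightarrow> (real \<Rightarrow> real^'n \<Rightarrow> real) \<Rightarrow> real \<Rightarrow> (real^'n::finite \<Rightarrow> real) \<Rightarrow> real^'n \<Rightarrow> real" where
  "Aop q b c t \<psi> x =
     (\<Sum>i\<in>UNIV. \<Sum>j\<in>UNIV. q t x $ i $ j * pdx i (pdx j \<psi>) x)
     + (\<Sum>i\<in>UNIV. b t x $ i * pdx i \<psi> x) - c t x * \<psi> x"

definition standing :: "real set \<Rightarrow> real \<Rightarrow> (real \<Rightarrow> real^'n \<Rightarrow> real^'n^'n) \<Rightarrow> (real \<Rightarrow> real^'n \<Rightarrow> real^'n)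
     \<Rightarrow> (real \<Rightarrow> real^'n::finite \<Rightarrow> real) \<Rightarrow> bool" where
  "standing I \<alpha> q b c \<longleftrightarrow>
     0 < \<alpha> \<and> \<alpha> < 1 \<and>
     (I = UNIV \<or> (\<exists>a. I = {a..} \<or> I = {a<..})) \<and>
     (\<forall>i j. holder_loc \<alpha> (I \<times> UNIV) (\<lambda>t x. q t x $ i $ j)) \<and>
     (\<forall>i. holder_loc \<alpha> (I \<times> UNIV) (\<lambda>t x. b t x $ i)) \<and>
     holder_loc \<alpha> (I \<times> UNIV) c \<and>
     (\<exists>c0. \<forall>t\<in>I. \<forall>x. c t x \<ge> c0) \<and>
     (\<forall>t\<in>I. \<forall>x i j. q t x $ i $ j = q t x $ j $ i) \<and>
     (\<exists>\<eta>. (\<exists>\<eta>0>0. \<forall>t\<in>I. \<forall>x. \<eta> t x \<ge> \<eta>0) \<and>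
          (\<forall>t\<in>I. \<forall>x \<xi>. \<xi> \<bullet> (q t x *v \<xi>) \<ge> \<eta> t x * (norm \<xi>)\<^sup>2)) \<and>
     (\<forall>J'. is_interval J' \<and> bounded J' \<and> J' \<subseteq> I \<longrightarrow>
        (\<exists>\<phi> lam. C2 \<phi> \<and> (\<forall>x. \<phi> x > 0) \<and> filterlim \<phi> at_top at_infinity \<and>
              (\<forall>t\<in>J'. \<forall>x. Aop q b c t \<phi> x \<le> lam * \<phi> x)))"

definition is_sol :: "real \<Rightarrow> (real \<Rightarrow> real^'n \<Rightarrow> real^'n^'n) \<Rightarrow> (real \<Rightarrow> real^'n \<Rightarrow> real^'n)
     \<Rightarrow> (real \<Rightarrow> real^'n \<Rightarrow> real) \<Rightarrow> real \<Rightarrow> (real^'n::finite \<Rightarrow> real)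
     \<Rightarrow> (real \<Rightarrow> real^'n \<Rightarrow> real) \<Rightarrow> bool" where
  "is_sol \<alpha> q b c s f u \<longleftrightarrow>
     continuous_on ({s..} \<times> UNIV) (\<lambda>(t,x). u t x) \<and>
     (\<forall>T\<ge>s. bounded ((\<lambda>(t,x). u t x) ` ({s..T} \<times> UNIV))) \<and>
     (\<forall>t>s. \<forall>x. (\<lambda>\<tau>. u \<tau> x) field_differentiable (at t)) \<and>
     (\<forall>t>s. \<forall>x i. (\<lambda>h. u t (x + h *\<^sub>R axis i 1)) field_differentiable (at 0)) \<and>
     (\<forall>t>s. \<forall>x i j. (\<lambda>h. pdx i (u t) (x + h *\<^sub>R axis j 1)) field_differentiable (at 0)) \<and>
     holder_loc \<alpha> ({s<..} \<times> UNIV) u \<and>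
     holder_loc \<alpha> ({s<..} \<times> UNIV) (pdt u) \<and>
     (\<forall>i. holder_loc \<alpha> ({s<..} \<times> UNIV) (\<lambda>t. pdx i (u t))) \<and>
     (\<forall>i j. holder_loc \<alpha> ({s<..} \<times> UNIV) (\<lambda>t. pdx j (pdx i (u t)))) \<and>
     (\<forall>t>s. \<forall>x. pdt u t x = Aop q b c t (u t) x) \<and>
     u s = f"

definition bcont :: "('a::topological_space \<Rightarrow> real) \<Rightarrow> bool" where
  "bcont f \<longleftrightarrow> continuous_on UNIV f \<and> bounded (range f)"

definition well_posed :: "real set \<Rightarrow> real \<Rightarrow> (real \<Rightarrow> real^'n \<Rightarrow> real^'n^'n) \<Rightarrow> (real \<Rightarrow> real^'n \<Rightarrow> real^'n)
     \<Rightarrow> (real \<Rightarrow> real^'n::finite \<Rightarrow> real) \<Rightarrow> bool" where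
  "well_posed I \<alpha> q b c \<longleftrightarrow>
     (\<forall>s\<in>I. \<forall>f. bcont f \<longrightarrow>
        (\<exists>u. is_sol \<alpha> q b c s f u) \<and>
        (\<forall>u v. is_sol \<alpha> q b c s f u \<and> is_sol \<alpha> q b c s f v \<longrightarrow> (\<forall>t\<ge>s. u t = v t)))"

definition evol :: "real \<Rightarrow> (real \<Rightarrow> real^'n \<Rightarrow> real^'n^'n) \<Rightarrow> (real \<Rightarrow> real^'n \<Rightarrow> real^'n)
     \<Rightarrow> (real \<Rightarrow> real^'n \<Rightarrow> real) \<Rightarrow> real \<Rightarrow> real \<Rightarrow> (real^'n::finite \<Rightarrow> real) \<Rightarrow> real^'n \<Rightarrow> real" where
  "evol \<alpha> q b c t s f = (SOME u. is_sol \<alpha> q b c s f u) t"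

definition evol_op :: "real \<Rightarrow> (real \<Rightarrow> real^'n \<Rightarrow> real^'n^'n) \<Rightarrow> (real \<Rightarrow> real^'n \<Rightarrow> real^'n)
     \<Rightarrow> (real \<Rightarrow> real^'n \<Rightarrow> real) \<Rightarrow> real \<Rightarrow> real
     \<Rightarrow> ((real^'n::finite) \<Rightarrow>\<^sub>C real) \<Rightarrow> ((real^'n) \<Rightarrow>\<^sub>C real)" where
  "evol_op \<alpha> q b c t s f = Bcontfun (evol \<alpha> q b c t s (apply_bcontfun f))"

definition compact_op :: "('a::real_normed_vector \<Rightarrow> 'b::metric_space) \<Rightarrow> bool" where
  "compact_op T \<longleftrightarrow> compact (closure (T ` cball 0 1))"

definition green_fn :: "real set \<Rightarrow> real \<Rightarrow> (real \<Rightarrow> real^'n \<Rightarrow> real^'n^'n) \<Rightarrow> (real \<Rightarrow> real^'n \<Rightarrow> real^'n)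
     \<Rightarrow> (real \<Rightarrow> real^'n \<Rightarrow> real) \<Rightarrow> (real \<Rightarrow> real \<Rightarrow> real^'n \<Rightarrow> real^'n::finite \<Rightarrow> real) \<Rightarrow> bool" where
  "green_fn I \<alpha> q b c g \<longleftrightarrow>
     (\<forall>t s x. s \<in> I \<and> s < t \<longrightarrow>
        (\<forall>y. g t s x y > 0) \<and> g t s x \<in> borel_measurable lborel \<and>
        (\<forall>f. bcont f \<longrightarrow> integrable lborel (\<lambda>y. g t s x y * f y) \<and>
             evol \<alpha> q b c t s f x = (\<integral>y. g t s x y * f y \<partial>lborel)))"

definition gmeas :: "(real \<Rightarrow> real \<Rightarrow> real^'n \<Rightarrow> real^'n::finite \<Rightarrow> real) \<Rightarrow> real \<Rightarrow> real \<Rightarrow> real^'n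
     \<Rightarrow> (real^'n) set \<Rightarrow> real" where
  "gmeas g t s x A = (LINT y:A|lborel. g t s x y)"

end

theory Submission
  imports Defs
begin

text \<open>
  If the Green kernels are tight, write \<open>G(t,s) = G(t,r) G(r,s)\<close> with \<open>s < r < t\<close>. On the unit
  ball of \<open>C\<^sub>b\<close> the functions \<open>G(r,s) f\<close> are uniformly bounded, and uniformly Hoelder on every
  ball by the uniform boundedness principle applied to the Hoelder quotients of single solutions.
  So on \<open>B(0,R)\<close> they fall into finitely many classes of uniformly close functions. After applying
  \<open>G(t,r)\<close>, the contribution of \<open>B(0,R)\<close> is controlled by this closeness and that of its
  complement by the tightness of \<open>g\<^sub>t\<^sub>,\<^sub>r\<close>, so the image of the unit ball is totally bounded.

  Conversely, the ramps \<open>\<psi>\<^sub>n\<close>, which vanish on \<open>B(0,n)\<close> and equal 1 outside \<open>B(0,n+1)\<close>, satisfy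
  \<open>G(t,s) \<psi>\<^sub>n \<rightarrow> 0\<close> pointwise by dominated convergence; compactness of \<open>G(t,s)\<close> makes some
  \<open>G(t,s) \<psi>\<^sub>n\<close> uniformly small, and it dominates \<open>g\<^sub>t\<^sub>,\<^sub>s(x, \<real>\<^sup>d \<setminus> B(0,n+1))\<close>.
\<close>

lemma Baire_closed_cover:
  fixes F :: "nat \<Rightarrow> 'a::complete_space set"
  assumes closed: "\<And>n. closed (F n)" and cover: "(\<Union>n. F n) = UNIV"
  obtains n x e where "e > 0" "ball x e \<subseteq> F n"
proof -
  have "\<exists>n x e. e > 0 \<and> ball x e \<subseteq> F n"
  proof (rule ccontr)
    assume no_ball: "\<not> ?thesis"
    have "Met_TC.mtopology interior_of \<Union>(range F) = {}"
    proof (rule Met_TC.metric_Baire_category_alt)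
      show "Met_TC.mcomplete TYPE('a)" using complete_UNIV by simp
      fix T assume "T \<in> range F"
      then obtain n where T: "T = F n" by auto
      have "Met_TC.mtopology interior_of T = {}"
      proof (rule ccontr)
        assume "Met_TC.mtopology interior_of T \<noteq> {}"
        then obtain x where "x \<in> interior T" by (auto simp: interior_of_def interior_def)
        then obtain e where "e > 0" "ball x e \<subseteq> T"
          by (meson interior_subset open_contains_ball open_interior subset_trans)
        then show False using no_ball T by blast
      qed
      then show "closedin Met_TC.mtopology T \<and> Met_TC.mtopology interior_of T = {}"
        using closed T by simp
    qed simp
    then show False using cover by simp
  qed
  then show ?thesis using that by blast
qed

lemma uniform_bound_of_pointwise_bound:
  fixes \<phi> :: "'i \<Rightarrow> 'a::{real_normed_vector,complete_space} \<Rightarrow> real"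
  assumes lin: "\<And>i. i \<in> S \<Longrightarrow> bounded_linear (\<phi> i)"
    and w: "\<And>i. i \<in> S \<Longrightarrow> w i \<ge> 0"
    and pointwise: "\<And>f. \<exists>C. \<forall>i\<in>S. \<bar>\<phi> i f\<bar> \<le> C * w i"
  obtains L where "\<And>f i. norm f \<le> 1 \<Longrightarrow> i \<in> S \<Longrightarrow> \<bar>\<phi> i f\<bar> \<le> L * w i"
proof -
  define F where "F n = (\<Inter>i\<in>S. {f. \<bar>\<phi> i f\<bar> \<le> real n * w i})" for n
  have closed: "closed (F n)" for n
    unfolding F_def
    using lin by (intro closed_INT ballI closed_Collect_le continuous_intros linear_continuous_on)
  have "f \<in> (\<Union>n. F n)" for f
  proof -
    obtain C where C: "\<forall>i\<in>S. \<bar>\<phi> i f\<bar> \<le> C * w i" using pointwise by blast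
    have "C * w i \<le> real (nat \<lceil>C\<rceil>) * w i" if "i \<in> S" for i
      using w[OF that] by (intro mult_right_mono) (auto simp: real_nat_ceiling_ge)
    with C have "f \<in> F (nat \<lceil>C\<rceil>)" unfolding F_def by force
    then show ?thesis by blast
  qed
  then have cover: "(\<Union>n. F n) = UNIV" by blast
  obtain n f0 e where e: "e > 0" "ball f0 e \<subseteq> F n"
    by (rule Baire_closed_cover[OF closed cover])
  \<comment> \<open>by linearity, the ball around \<open>f0\<close> inside \<open>F n\<close> yields a ball around 0 inside \<open>F (2n)\<close>\<close>
  have "\<bar>\<phi> i f\<bar> \<le> (4 * real n / e) * w i" if f: "norm f \<le> 1" and i: "i \<in> S" for f i
  proof -
    interpret bounded_linear "\<phi> i" using lin[OF i] .
    have "norm ((e/2) *\<^sub>R f) < e"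
      using e(1) f by (simp add: mult_left_le)
    then have "f0 + (e/2) *\<^sub>R f \<in> F n" "f0 \<in> F n" using e by (auto simp: dist_norm)
    then have "\<bar>\<phi> i f0 + (e/2) * \<phi> i f\<bar> \<le> real n * w i" "\<bar>\<phi> i f0\<bar> \<le> real n * w i"
      using i unfolding F_def by (auto simp: add scale)
    then have "(e/2) * \<bar>\<phi> i f\<bar> \<le> 2 * (real n * w i)"
      using e(1) by (simp add: abs_mult)
    then show ?thesis
      using e(1) by (simp add: field_simps)
  qed
  then show ?thesis using that by blast
qed

lemma compact_closure_if_finite_nets:
  fixes S :: "'a::complete_space set"
  assumes "\<And>e. e > 0 \<Longrightarrow> \<exists>k. finite k \<and> S \<subseteq> (\<Union>x\<in>k. ball x e)"
  shows "compact (closure S)"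
  unfolding compact_eq_totally_bounded
proof (intro conjI allI impI)
  show "complete (closure S)" by (simp add: complete_eq_closed)
  fix e :: real assume "e > 0"
  then obtain k where k: "finite k" "S \<subseteq> (\<Union>x\<in>k. ball x (e/2))" using assms half_gt_zero by blast
  have "closure S \<subseteq> (\<Union>x\<in>k. cball x (e/2))"
    using k by (intro closure_minimal closed_UN) (force simp: subset_iff)+
  also have "\<dots> \<subseteq> (\<Union>x\<in>k. ball x e)" using \<open>e > 0\<close> by (intro UN_mono) auto
  finally show "\<exists>k. finite k \<and> closure S \<subseteq> (\<Union>x\<in>k. ball x e)" using k(1) by blast
qed

lemma finite_net_if_finite_classes:
  fixes T :: "'b \<Rightarrow> 'a::metric_space"
  assumes "finite (\<Phi> ` H)" and "\<And>b b'. b \<in> H \<Longrightarrow> b' \<in> H \<Longrightarrow> \<Phi> b = \<Phi> b' \<Longrightarrow> dist (T b) (T b') < e"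
  shows "\<exists>k. finite k \<and> T ` H \<subseteq> (\<Union>x\<in>k. ball x e)"
proof -
  define rep where "rep v = (SOME b. b \<in> H \<and> \<Phi> b = v)" for v
  have rep: "rep (\<Phi> b) \<in> H \<and> \<Phi> (rep (\<Phi> b)) = \<Phi> b" if "b \<in> H" for b
    unfolding rep_def by (rule someI_ex) (use that in blast)
  define k where "k = (T \<circ> rep) ` \<Phi> ` H"
  have "finite k" unfolding k_def using assms(1) by simp
  moreover have "T b \<in> (\<Union>x\<in>k. ball x e)" if "b \<in> H" for b
  proof (rule UN_I)
    show "T (rep (\<Phi> b)) \<in> k" unfolding k_def using that by simp
    show "T b \<in> ball (T (rep (\<Phi> b))) e" using assms(2)[of "rep (\<Phi> b)" b] rep that by simp
  qed
  ultimately show ?thesis by auto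
qed

lemma abs_diff_less_if_floor_divide_eq:
  fixes a c \<eta> :: real
  assumes "\<lfloor>a / \<eta>\<rfloor> = \<lfloor>c / \<eta>\<rfloor>" "\<eta> > 0"
  shows "\<bar>a - c\<bar> < \<eta>"
proof -
  have "\<bar>a / \<eta> - c / \<eta>\<bar> < 1"
    using assms(1) floor_correct[of "a / \<eta>"] floor_correct[of "c / \<eta>"] by linarith
  then show ?thesis using assms(2) by (simp add: diff_divide_distrib[symmetric] divide_less_eq)
qed

lemma finite_classes_if_uniformly_equicontinuous:
  fixes h :: "'b \<Rightarrow> 'a::metric_space \<Rightarrow> real"
  assumes K: "compact K" and "\<eta> > 0" and "\<delta> > 0"
    and bounded: "\<And>b y. b \<in> H \<Longrightarrow> \<bar>h b y\<bar> \<le> B"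
    and equicont: "\<And>b x y. b \<in> H \<Longrightarrow> x \<in> K \<Longrightarrow> y \<in> K \<Longrightarrow> dist x y < \<delta> \<Longrightarrow> \<bar>h b x - h b y\<bar> \<le> \<eta>"
  obtains \<Phi> :: "'b \<Rightarrow> 'a \<Rightarrow> int"
  where "finite (\<Phi> ` H)"
    and "\<And>b b' y. b \<in> H \<Longrightarrow> b' \<in> H \<Longrightarrow> \<Phi> b = \<Phi> b' \<Longrightarrow> y \<in> K \<Longrightarrow> \<bar>h b y - h b' y\<bar> \<le> 3 * \<eta>"
proof -
  obtain P where P: "finite P" "P \<subseteq> K" "K \<subseteq> (\<Union>p\<in>P. ball p \<delta>)"
    using seq_compact_imp_totally_bounded[OF compact_imp_seq_compact[OF K]] \<open>\<delta> > 0\<close> by meson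
  define N where "N = \<lceil>B / \<eta>\<rceil> + 1"
  define \<Phi> where "\<Phi> b = restrict (\<lambda>p. \<lfloor>h b p / \<eta>\<rfloor>) P" for b
  have "\<lfloor>h b p / \<eta>\<rfloor> \<in> {-N..N}" if "b \<in> H" for b p
  proof -
    have "\<bar>h b p / \<eta>\<bar> \<le> B / \<eta>" using bounded[OF that] \<open>\<eta> > 0\<close> by (simp add: divide_right_mono)
    then have "- (B / \<eta>) \<le> h b p / \<eta>" "h b p / \<eta> \<le> B / \<eta>"
      using abs_le_iff[of "h b p / \<eta>" "B / \<eta>"] by linarith+
    then have "real_of_int \<lfloor>h b p / \<eta>\<rfloor> \<le> of_int N" "- real_of_int N \<le> of_int \<lfloor>h b p / \<eta>\<rfloor>"
      unfolding N_def using floor_correct[of "h b p / \<eta>"] le_of_int_ceiling[of "B / \<eta>"] by linarith+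
    then show ?thesis by simp
  qed
  then have "\<Phi> ` H \<subseteq> PiE P (\<lambda>_. {-N..N})" unfolding \<Phi>_def by auto
  then have "finite (\<Phi> ` H)" using P(1) by (meson finite_PiE finite_atLeastAtMost_int finite_subset)
  moreover have "\<bar>h b y - h b' y\<bar> \<le> 3 * \<eta>"
    if b: "b \<in> H" "b' \<in> H" and eq: "\<Phi> b = \<Phi> b'" and y: "y \<in> K" for b b' y
  proof -
    obtain p where p: "p \<in> P" "dist p y < \<delta>" using P(3) y by auto
    have "\<lfloor>h b p / \<eta>\<rfloor> = \<lfloor>h b' p / \<eta>\<rfloor>" using fun_cong[OF eq, of p] p(1) unfolding \<Phi>_def by simp
    then have "\<bar>h b p - h b' p\<bar> < \<eta>" using abs_diff_less_if_floor_divide_eq \<open>\<eta> > 0\<close> by blast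
    moreover have "\<bar>h c y - h c p\<bar> \<le> \<eta>" if "c \<in> H" for c
      using equicont[OF that y, of p] P(2) p by (simp add: dist_commute subset_iff)
    ultimately show ?thesis using b by (smt (verit))
  qed
  ultimately show ?thesis using that by blast
qed

lemma scaled_powr_le_near_0:
  fixes L \<eta> \<alpha> :: real
  assumes "\<alpha> > 0" "\<eta> > 0"
  obtains \<delta> where "\<delta> > 0" "\<And>u. 0 \<le> u \<Longrightarrow> u < \<delta> \<Longrightarrow> L * u powr \<alpha> \<le> \<eta>"
proof
  define z where "z = \<eta> / (\<bar>L\<bar> + 1)"
  have z: "z > 0" unfolding z_def using assms by simp
  show "z powr (1/\<alpha>) > 0" using z by simp
  fix u assume u: "0 \<le> u" "u < z powr (1/\<alpha>)"
  have "u powr \<alpha> \<le> (z powr (1/\<alpha>)) powr \<alpha>" using u assms(1) by (intro powr_mono2) auto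
  also have "\<dots> = z" using assms(1) z by (simp add: powr_powr)
  finally have "\<bar>L\<bar> * u powr \<alpha> \<le> \<bar>L\<bar> * z" by (simp add: mult_left_mono)
  also have "\<dots> \<le> \<eta>" unfolding z_def using assms(2) by (simp add: field_simps)
  finally show "L * u powr \<alpha> \<le> \<eta>" by (smt (verit) mult_right_mono abs_ge_self powr_ge_zero)
qed

lemma holder_loc_subset: "S' \<subseteq> S \<Longrightarrow> holder_loc a S f \<Longrightarrow> holder_loc a S' f"
  unfolding holder_loc_def by (meson continuous_on_subset order_trans)

lemma is_sol_restart:
  assumes "is_sol a q b c s f u" "s \<le> r"
  shows "is_sol a q b c r (u r) u"
proof -
  have holder: "holder_loc a ({s<..} \<times> UNIV) h \<Longrightarrow> holder_loc a ({r<..} \<times> UNIV) h"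
    for h :: "real \<Rightarrow> real^'n \<Rightarrow> real"
    by (rule holder_loc_subset[rotated]) (use assms(2) in auto)
  have bounded: "bounded ((\<lambda>(t, x). u t x) ` ({r..T} \<times> UNIV))"
    if "\<forall>T\<ge>s. bounded ((\<lambda>(t, x). u t x) ` ({s..T} \<times> UNIV))" "r \<le> T" for T
  proof (rule bounded_subset)
    show "bounded ((\<lambda>(t, x). u t x) ` ({s..T} \<times> UNIV))" using that assms(2) by auto
    show "(\<lambda>(t, x). u t x) ` ({r..T} \<times> UNIV) \<subseteq> (\<lambda>(t, x). u t x) ` ({s..T} \<times> UNIV)"
      using assms(2) by (intro image_mono) auto
  qed
  have "continuous_on ({s..} \<times> UNIV) (\<lambda>(t, x). u t x) \<Longrightarrow> continuous_on ({r..} \<times> UNIV) (\<lambda>(t, x). u t x)"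
    by (rule continuous_on_subset) (use assms(2) in auto)
  with assms(1) holder bounded show ?thesis
    unfolding is_sol_def using assms(2) by auto
qed

lemma bcont_is_sol_slice:
  assumes "is_sol a q b c s f u" "s \<le> t"
  shows "bcont (u t)"
proof -
  have "continuous_on ({s..} \<times> UNIV) (\<lambda>(t,x). u t x)" using assms(1) unfolding is_sol_def by blast
  then have "continuous_on UNIV (\<lambda>x. (\<lambda>(t,x). u t x) (t, x))"
    by (rule continuous_on_compose2) (use assms(2) in \<open>auto intro!: continuous_intros\<close>)
  moreover have "bounded ((\<lambda>(t,x). u t x) ` ({s..t} \<times> UNIV))" using assms unfolding is_sol_def by blast
  then have "bounded (range (u t))" by (rule bounded_subset) (use assms(2) in force)
  ultimately show ?thesis by (simp add: bcont_def)
qed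

lemma holder_is_sol_slice:
  assumes "is_sol a q b c s f u" "s < r" "compact K"
  obtains C where "\<And>x y. x \<in> K \<Longrightarrow> y \<in> K \<Longrightarrow> \<bar>u r x - u r y\<bar> \<le> C * norm (x - y) powr a"
proof -
  have "compact ({r} \<times> K)" "{r} \<times> K \<subseteq> {s<..} \<times> UNIV" using assms(2,3) by (auto simp: compact_Times)
  with assms(1) obtain C where
    "\<And>t x t' y. (t,x) \<in> {r} \<times> K \<Longrightarrow> (t',y) \<in> {r} \<times> K \<Longrightarrow>
       \<bar>u t x - u t' y\<bar> \<le> C * (\<bar>t - t'\<bar> powr (a/2) + norm (x - y) powr a)"
    unfolding is_sol_def holder_loc_def by meson
  then show ?thesis using that[of C] by fastforce
qed

lemma bcont_iff_bcontfun: "bcont f \<longleftrightarrow> f \<in> bcontfun"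
  by (simp add: bcont_def bcontfun_def)

lemma bcont_apply_bcontfun: "bcont (apply_bcontfun f)"
  by (simp add: bcont_iff_bcontfun apply_bcontfun)

lemma bcont_const: "bcont (\<lambda>y. a)"
  by (simp add: bcont_iff_bcontfun const_bcontfun)

locale evolution_with_green =
  fixes I :: "real set" and \<alpha> :: real
    and q :: "real \<Rightarrow> real^'n::finite \<Rightarrow> real^'n^'n"
    and b :: "real \<Rightarrow> real^'n \<Rightarrow> real^'n"
    and c :: "real \<Rightarrow> real^'n \<Rightarrow> real"
    and g :: "real \<Rightarrow> real \<Rightarrow> real^'n \<Rightarrow> real^'n \<Rightarrow> real"
  assumes well_posed: "well_posed I \<alpha> q b c"
    and green: "green_fn I \<alpha> q b c g"
begin

abbreviation G where "G \<equiv> evol \<alpha> q b c"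

lemma is_sol_evol: "s \<in> I \<Longrightarrow> bcont f \<Longrightarrow> is_sol \<alpha> q b c s f (\<lambda>t. G t s f)"
  using well_posed unfolding well_posed_def evol_def by (metis someI_ex)

lemma evol_eq_is_sol: "s \<in> I \<Longrightarrow> bcont f \<Longrightarrow> is_sol \<alpha> q b c s f u \<Longrightarrow> s \<le> t \<Longrightarrow> G t s f = u t"
  using well_posed is_sol_evol unfolding well_posed_def by blast

lemma bcont_evol: "s \<in> I \<Longrightarrow> bcont f \<Longrightarrow> s \<le> t \<Longrightarrow> bcont (G t s f)"
  using bcont_is_sol_slice is_sol_evol by blast

lemma evol_comp:
  assumes "s \<in> I" "r \<in> I" "bcont f" "s \<le> r" "r \<le> t"
  shows "G t r (G r s f) = G t s f"
  using evol_eq_is_sol[OF assms(2) bcont_evol[OF assms(1,3,4)]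
      is_sol_restart[OF is_sol_evol[OF assms(1,3)] assms(4)] assms(5)] .

lemma green_pos: "s \<in> I \<Longrightarrow> s < t \<Longrightarrow> g t s x y > 0"
  using green unfolding green_fn_def by blast

lemma integrable_green:
  "s \<in> I \<Longrightarrow> s < t \<Longrightarrow> bcont f \<Longrightarrow> integrable lborel (\<lambda>y. g t s x y * f y)"
  using green unfolding green_fn_def by blast

lemma evol_eq_integral:
  "s \<in> I \<Longrightarrow> s < t \<Longrightarrow> bcont f \<Longrightarrow> G t s f x = (\<integral>y. g t s x y * f y \<partial>lborel)"
  using green unfolding green_fn_def by blast

lemma evol_op_apply:
  "s \<in> I \<Longrightarrow> s \<le> t \<Longrightarrow> apply_bcontfun (evol_op \<alpha> q b c t s f) = G t s (apply_bcontfun f)"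
  unfolding evol_op_def
  by (rule Bcontfun_inverse) (simp add: bcont_evol bcont_apply_bcontfun flip: bcont_iff_bcontfun)

lemma evol_abs_le:
  assumes "s \<in> I" "s < t" "bcont f" "\<And>y. \<bar>f y\<bar> \<le> B"
  shows "\<bar>G t s f x\<bar> \<le> B * G t s (\<lambda>_. 1) x"
proof -
  have "\<bar>G t s f x\<bar> = \<bar>\<integral>y. g t s x y * f y \<partial>lborel\<bar>" using evol_eq_integral assms(1-3) by simp
  also have "\<dots> \<le> (\<integral>y. B * (g t s x y * 1) \<partial>lborel)"
  proof (rule integral_abs_bound_integral)
    show "integrable lborel (\<lambda>y. g t s x y * f y)" using integrable_green assms(1-3) .
    show "integrable lborel (\<lambda>y. B * (g t s x y * 1))"
      using integrable_green[OF assms(1,2) bcont_const] by simp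
    show "\<bar>g t s x y * f y\<bar> \<le> B * (g t s x y * 1)" for y
    proof -
      have "\<bar>g t s x y * f y\<bar> = g t s x y * \<bar>f y\<bar>"
        using green_pos[OF assms(1,2)] by (simp add: abs_mult less_imp_le)
      also have "\<dots> \<le> g t s x y * B"
        using green_pos[OF assms(1,2)] assms(4) by (simp add: mult_left_mono)
      finally show ?thesis by (simp add: mult.commute)
    qed
  qed
  also have "\<dots> = B * G t s (\<lambda>_. 1) x" using evol_eq_integral[OF assms(1,2) bcont_const] by simp
  finally show ?thesis .
qed

lemma evol_one_bounds:
  assumes "s \<in> I" "s < t"
  obtains M where "M \<ge> 0" "\<And>x. 0 \<le> G t s (\<lambda>_. 1) x" "\<And>x. G t s (\<lambda>_. 1) x \<le> M"
proof -
  have "bounded (range (G t s (\<lambda>_. 1)))"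
    using bcont_evol[OF assms(1) bcont_const] assms(2) by (simp add: bcont_def)
  then obtain M where "\<And>x. \<bar>G t s (\<lambda>_. 1) x\<bar> \<le> M" by (auto simp: bounded_real)
  moreover have "0 \<le> G t s (\<lambda>_. 1) x" for x
    unfolding evol_eq_integral[OF assms bcont_const]
    using green_pos[OF assms] by (intro integral_nonneg_AE) (auto simp: less_imp_le)
  ultimately show ?thesis using that[of M] by (smt (verit))
qed

lemma abs_evol_bcontfun_le:
  "s \<in> I \<Longrightarrow> s < t \<Longrightarrow> \<bar>G t s (apply_bcontfun f) y\<bar> \<le> norm f * G t s (\<lambda>_. 1) y"
  using norm_bounded[of f] by (intro evol_abs_le bcont_apply_bcontfun) simp_all

lemma abs_evol_unit_ball_le:
  assumes "s \<in> I" "s < t" "norm f \<le> 1" "\<And>x. 0 \<le> G t s (\<lambda>_. 1) x" "\<And>x. G t s (\<lambda>_. 1) x \<le> M"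
  shows "\<bar>G t s (apply_bcontfun f) y\<bar> \<le> M"
proof -
  have "\<bar>G t s (apply_bcontfun f) y\<bar> \<le> norm f * G t s (\<lambda>_. 1) y"
    by (rule abs_evol_bcontfun_le[OF assms(1,2)])
  also have "\<dots> \<le> 1 * M" using assms(3) assms(4,5)[of y] by (intro mult_mono) auto
  finally show ?thesis by simp
qed

lemma bounded_linear_evol_at:
  assumes "s \<in> I" "s < t"
  shows "bounded_linear (\<lambda>f :: (real^'n) \<Rightarrow>\<^sub>C real. G t s (apply_bcontfun f) x)"
proof -
  note integral = evol_eq_integral[OF assms bcont_apply_bcontfun]
  note integrable = integrable_green[OF assms bcont_apply_bcontfun]
  obtain M where M: "M \<ge> 0" "\<And>x. 0 \<le> G t s (\<lambda>_. 1) x" "\<And>x. G t s (\<lambda>_. 1) x \<le> M"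
    using evol_one_bounds[OF assms] by blast
  show ?thesis
  proof (rule bounded_linear_intro[where K = M])
    show "G t s (apply_bcontfun (f + h)) x = G t s (apply_bcontfun f) x + G t s (apply_bcontfun h) x" for f h
      unfolding integral using integrable[of x f] integrable[of x h] by (simp add: distrib_left)
    show "G t s (apply_bcontfun (r *\<^sub>R f)) x = r *\<^sub>R G t s (apply_bcontfun f) x" for r f
      unfolding integral by (simp add: mult.left_commute)
    fix f :: "(real^'n) \<Rightarrow>\<^sub>C real"
    have "\<bar>G t s (apply_bcontfun f) x\<bar> \<le> norm f * G t s (\<lambda>_. 1) x"
      by (rule abs_evol_bcontfun_le[OF assms])
    also have "\<dots> \<le> norm f * M" using M(3) by (simp add: mult_left_mono)
    finally show "norm (G t s (apply_bcontfun f) x) \<le> norm f * M" by simp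
  qed
qed

text \<open>\<open>is_sol\<close> only gives a Hoelder constant for each single solution; the uniform one comes from
  Baire's theorem.\<close>

lemma evol_unit_ball_uniformly_holder:
  assumes "s \<in> I" "s < r" "compact K"
  obtains L where "\<And>f x y. norm f \<le> 1 \<Longrightarrow> x \<in> K \<Longrightarrow> y \<in> K \<Longrightarrow>
     \<bar>G r s (apply_bcontfun f) x - G r s (apply_bcontfun f) y\<bar> \<le> L * norm (x - y) powr \<alpha>"
proof -
  define \<phi> where "\<phi> i f = G r s (apply_bcontfun f) (fst i) - G r s (apply_bcontfun f) (snd i)"
    for i :: "(real^'n) \<times> (real^'n)" and f
  have linear: "bounded_linear (\<phi> i)" for i
    unfolding \<phi>_def by (intro bounded_linear_sub bounded_linear_evol_at assms(1,2))
  have pointwise: "\<exists>C. \<forall>i\<in>K \<times> K. \<bar>\<phi> i f\<bar> \<le> C * norm (fst i - snd i) powr \<alpha>" for f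
  proof -
    obtain C where "\<And>x y. x \<in> K \<Longrightarrow> y \<in> K \<Longrightarrow>
        \<bar>G r s (apply_bcontfun f) x - G r s (apply_bcontfun f) y\<bar> \<le> C * norm (x - y) powr \<alpha>"
      using holder_is_sol_slice[OF is_sol_evol[OF assms(1) bcont_apply_bcontfun[of f]] assms(2,3)] by blast
    then show ?thesis unfolding \<phi>_def by auto
  qed
  obtain L where "\<And>f i. norm f \<le> 1 \<Longrightarrow> i \<in> K \<times> K \<Longrightarrow> \<bar>\<phi> i f\<bar> \<le> L * norm (fst i - snd i) powr \<alpha>"
    using uniform_bound_of_pointwise_bound[OF linear _ pointwise] by auto
  then show ?thesis using that[of L] unfolding \<phi>_def by fastforce
qed

lemma gmeas_eq_integral: "gmeas g t s x A = (\<integral>y. indicator A y * g t s x y \<partial>lborel)"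
  by (simp add: gmeas_def set_lebesgue_integral_def)

lemma integrable_green_indicator:
  assumes "s \<in> I" "s < t" "A \<in> sets lborel"
  shows "integrable lborel (\<lambda>y. indicator A y * g t s x y)"
  using integrable_mult_indicator[OF assms(3) integrable_green[OF assms(1,2) bcont_const[of 1], of x]] by simp

lemma evol_diff_le_tail:
  assumes "s \<in> I" "s < t" "bcont h" "bcont h'" "\<And>y. \<bar>h y\<bar> \<le> B" "\<And>y. \<bar>h' y\<bar> \<le> B"
    and "\<And>y. y \<in> ball 0 R \<Longrightarrow> \<bar>h y - h' y\<bar> \<le> d" and "d \<ge> 0"
  shows "\<bar>G t s h x - G t s h' x\<bar> \<le> d * G t s (\<lambda>_. 1) x + 2 * B * gmeas g t s x (UNIV - ball 0 R)"
proof -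
  let ?A = "UNIV - ball (0::real^'n) R"
  have diff: "\<bar>h y - h' y\<bar> \<le> d + 2 * B * indicator ?A y" for y
    using assms(5,6)[of y] assms(7,8) by (cases "y \<in> ball 0 R") (auto simp: abs_le_iff)
  note integrable = integrable_green[OF assms(1,2)]
  note integrable_tail = integrable_green_indicator[OF assms(1,2), of ?A x]
  have "G t s h x - G t s h' x = (\<integral>y. g t s x y * h y - g t s x y * h' y \<partial>lborel)"
    using evol_eq_integral[OF assms(1,2) assms(3)] evol_eq_integral[OF assms(1,2) assms(4)]
      integrable[OF assms(3)] integrable[OF assms(4)] by simp
  also have "\<bar>\<dots>\<bar> \<le> (\<integral>y. d * (g t s x y * 1) + 2 * B * (indicator ?A y * g t s x y) \<partial>lborel)"
  proof (rule integral_abs_bound_integral)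
    show "integrable lborel (\<lambda>y. g t s x y * h y - g t s x y * h' y)"
      using integrable[OF assms(3)] integrable[OF assms(4)] by simp
    show "integrable lborel (\<lambda>y. d * (g t s x y * 1) + 2 * B * (indicator ?A y * g t s x y))"
      using integrable[OF bcont_const] integrable_tail by simp
    fix y
    have pos: "0 < g t s x y" by (rule green_pos[OF assms(1,2)])
    have "\<bar>g t s x y * h y - g t s x y * h' y\<bar> = g t s x y * \<bar>h y - h' y\<bar>"
      using pos by (simp add: abs_mult flip: right_diff_distrib)
    also have "\<dots> \<le> g t s x y * (d + 2 * B * indicator ?A y)"
      by (rule mult_left_mono[OF diff]) (use pos in simp)
    finally show "\<bar>g t s x y * h y - g t s x y * h' y\<bar>
        \<le> d * (g t s x y * 1) + 2 * B * (indicator ?A y * g t s x y)"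
      by (simp add: algebra_simps)
  qed
  also have "\<dots> = d * G t s (\<lambda>_. 1) x + 2 * B * gmeas g t s x ?A"
    using integrable[OF bcont_const] integrable_tail
    by (simp add: evol_eq_integral[OF assms(1,2) bcont_const] gmeas_eq_integral)
  finally show ?thesis .
qed

lemma dist_evol_op_le:
  assumes "s \<in> I" "r \<in> I" "s < r" "r < t" "norm f \<le> 1" "norm f' \<le> 1"
    and M1: "\<And>x. 0 \<le> G r s (\<lambda>_. 1) x" "\<And>x. G r s (\<lambda>_. 1) x \<le> M1"
    and M2: "\<And>x. G t r (\<lambda>_. 1) x \<le> M2"
    and close: "\<And>y. y \<in> ball 0 R \<Longrightarrow> \<bar>G r s (apply_bcontfun f) y - G r s (apply_bcontfun f') y\<bar> \<le> d"
    and "d \<ge> 0"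
    and tail: "\<And>x. gmeas g t r x (UNIV - ball 0 R) \<le> \<tau>"
  shows "dist (evol_op \<alpha> q b c t s f) (evol_op \<alpha> q b c t s f') \<le> d * M2 + 2 * M1 * \<tau>"
proof (rule dist_bound)
  fix x
  have "\<bar>G r s (apply_bcontfun h) y\<bar> \<le> M1" if "norm h \<le> 1" for h y
    by (rule abs_evol_unit_ball_le[OF assms(1,3) that M1])
  then have "\<bar>G t r (G r s (apply_bcontfun f)) x - G t r (G r s (apply_bcontfun f')) x\<bar>
      \<le> d * G t r (\<lambda>_. 1) x + 2 * M1 * gmeas g t r x (UNIV - ball 0 R)"
    using assms(1,3,5,6) close \<open>d \<ge> 0\<close>
    by (intro evol_diff_le_tail[OF assms(2,4)] bcont_evol bcont_apply_bcontfun) auto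
  also have "\<dots> \<le> d * M2 + 2 * M1 * \<tau>"
    using M1[of x] M2[of x] tail[of x] \<open>d \<ge> 0\<close> by (intro add_mono mult_left_mono) auto
  finally show "dist (evol_op \<alpha> q b c t s f x) (evol_op \<alpha> q b c t s f' x) \<le> d * M2 + 2 * M1 * \<tau>"
    using assms(1-4) by (simp add: evol_op_apply evol_comp bcont_apply_bcontfun dist_real_def)
qed

lemma evol_unit_ball_finite_classes:
  assumes "\<alpha> > 0" "s \<in> I" "s < r" "\<eta> > 0"
    and M: "\<And>x. 0 \<le> G r s (\<lambda>_. 1) x" "\<And>x. G r s (\<lambda>_. 1) x \<le> M"
  obtains \<Phi> :: "((real^'n) \<Rightarrow>\<^sub>C real) \<Rightarrow> real^'n \<Rightarrow> int"
  where "finite (\<Phi> ` cball 0 1)"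
    and "\<And>f f' y. f \<in> cball 0 1 \<Longrightarrow> f' \<in> cball 0 1 \<Longrightarrow> \<Phi> f = \<Phi> f' \<Longrightarrow> y \<in> cball 0 R \<Longrightarrow>
      \<bar>G r s (apply_bcontfun f) y - G r s (apply_bcontfun f') y\<bar> \<le> 3 * \<eta>"
proof -
  let ?H = "cball (0 :: (real^'n) \<Rightarrow>\<^sub>C real) 1"
  obtain L where L: "\<And>f x y. norm f \<le> 1 \<Longrightarrow> x \<in> cball 0 R \<Longrightarrow> y \<in> cball 0 R \<Longrightarrow>
      \<bar>G r s (apply_bcontfun f) x - G r s (apply_bcontfun f) y\<bar> \<le> L * norm (x - y) powr \<alpha>"
    using evol_unit_ball_uniformly_holder[OF assms(2,3) compact_cball] by blast
  obtain \<delta> where "\<delta> > 0" and \<delta>: "\<And>u. 0 \<le> u \<Longrightarrow> u < \<delta> \<Longrightarrow> L * u powr \<alpha> \<le> \<eta>"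
    using scaled_powr_le_near_0[OF assms(1,4)] by blast
  have bounded: "\<bar>G r s (apply_bcontfun f) y\<bar> \<le> M" if "f \<in> ?H" for f y
    using abs_evol_unit_ball_le[OF assms(2,3) _ M] that by simp
  have equicontinuous: "\<bar>G r s (apply_bcontfun f) x - G r s (apply_bcontfun f) y\<bar> \<le> \<eta>"
    if "f \<in> ?H" "x \<in> cball 0 R" "y \<in> cball 0 R" "dist x y < \<delta>" for f x y
    using L[of f x y] \<delta>[of "norm (x - y)"] that by (simp add: dist_norm)
  show ?thesis
    by (rule finite_classes_if_uniformly_equicontinuous[where K = "cball 0 R" and H = ?H and B = M
        and \<eta> = \<eta> and \<delta> = \<delta> and h = "\<lambda>f. G r s (apply_bcontfun f)"];
        use bounded equicontinuous \<open>\<eta> > 0\<close> \<open>\<delta> > 0\<close> that in auto)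
qed

lemma compact_evol_op_if_tight:
  assumes "\<alpha> > 0" "s \<in> I" "r \<in> I" "s < r" "r < t"
    and tight: "\<And>\<epsilon>. \<epsilon> > 0 \<Longrightarrow> \<exists>R>0. \<forall>x. gmeas g t r x (UNIV - ball 0 R) \<le> \<epsilon>"
  shows "compact_op (evol_op \<alpha> q b c t s)"
  unfolding compact_op_def
proof (rule compact_closure_if_finite_nets)
  fix \<epsilon> :: real assume "\<epsilon> > 0"
  obtain M1 where M1: "M1 \<ge> 0" "\<And>x. 0 \<le> G r s (\<lambda>_. 1) x" "\<And>x. G r s (\<lambda>_. 1) x \<le> M1"
    using evol_one_bounds[OF assms(2,4)] by blast
  obtain M2 where M2: "M2 \<ge> 0" "\<And>x. 0 \<le> G t r (\<lambda>_. 1) x" "\<And>x. G t r (\<lambda>_. 1) x \<le> M2"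
    using evol_one_bounds[OF assms(3,5)] by blast
  define \<tau> where "\<tau> = \<epsilon> / (8 * (M1 + 1))"
  define \<eta> where "\<eta> = \<epsilon> / (12 * (M2 + 1))"
  have "\<tau> > 0" "\<eta> > 0" using \<open>\<epsilon> > 0\<close> M1(1) M2(1) by (simp_all add: \<tau>_def \<eta>_def)
  have "3 * \<eta> * M2 \<le> \<epsilon> / 4" "2 * M1 * \<tau> \<le> \<epsilon> / 4"
    using \<open>\<epsilon> > 0\<close> M1(1) M2(1) by (simp_all add: \<tau>_def \<eta>_def field_simps)
  then have small: "3 * \<eta> * M2 + 2 * M1 * \<tau> < \<epsilon>" using \<open>\<epsilon> > 0\<close> by linarith
  obtain R where R: "\<And>x. gmeas g t r x (UNIV - ball 0 R) \<le> \<tau>"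
    using tight[OF \<open>\<tau> > 0\<close>] by blast
  obtain \<Phi> :: "((real^'n) \<Rightarrow>\<^sub>C real) \<Rightarrow> real^'n \<Rightarrow> int" where "finite (\<Phi> ` cball 0 1)" and
    classes: "\<And>f f' y. f \<in> cball 0 1 \<Longrightarrow> f' \<in> cball 0 1 \<Longrightarrow> \<Phi> f = \<Phi> f' \<Longrightarrow> y \<in> cball 0 R \<Longrightarrow>
      \<bar>G r s (apply_bcontfun f) y - G r s (apply_bcontfun f') y\<bar> \<le> 3 * \<eta>"
    using evol_unit_ball_finite_classes[OF assms(1,2,4) \<open>\<eta> > 0\<close> M1(2,3)] by blast
  show "\<exists>k. finite k \<and> evol_op \<alpha> q b c t s ` cball 0 1 \<subseteq> (\<Union>x\<in>k. ball x \<epsilon>)"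
  proof (rule finite_net_if_finite_classes[OF \<open>finite (\<Phi> ` cball 0 1)\<close>])
    fix f f' :: "(real^'n) \<Rightarrow>\<^sub>C real" assume "f \<in> cball 0 1" "f' \<in> cball 0 1" "\<Phi> f = \<Phi> f'"
    then have "dist (evol_op \<alpha> q b c t s f) (evol_op \<alpha> q b c t s f') \<le> 3 * \<eta> * M2 + 2 * M1 * \<tau>"
      using \<open>\<eta> > 0\<close> classes
      by (intro dist_evol_op_le[OF assms(2-5) _ _ M1(2,3) M2(3) _ _ R]) auto
    then show "dist (evol_op \<alpha> q b c t s f) (evol_op \<alpha> q b c t s f') < \<epsilon>" using small by linarith
  qed
qed

end

definition outer_ramp :: "nat \<Rightarrow> 'a::real_normed_vector \<Rightarrow> real" where
  "outer_ramp n y = min 1 (max 0 (norm y - real n))"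

lemma outer_ramp_bcontfun: "outer_ramp n \<in> bcontfun"
proof (rule bcontfun_normI)
  show "continuous_on UNIV (outer_ramp n)" unfolding outer_ramp_def by (intro continuous_intros)
  show "norm (outer_ramp n y) \<le> 1" for y by (simp add: outer_ramp_def)
qed

lemma outer_ramp_bounds: "0 \<le> outer_ramp n y" "outer_ramp n y \<le> 1"
  unfolding outer_ramp_def by auto

lemma outer_ramp_eventually_0: "eventually (\<lambda>n. outer_ramp n y = 0) sequentially"
proof -
  obtain N :: nat where "norm y \<le> real N" using real_arch_simple by blast
  then show ?thesis unfolding eventually_sequentially outer_ramp_def
    by (intro exI[of _ N]) auto
qed

lemma indicator_outside_ball_le_outer_ramp:
  "indicator (UNIV - ball 0 (real n + 1)) y \<le> outer_ramp n y"
  by (auto simp: outer_ramp_def indicator_def)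

lemma compact_pointwise_null_has_small_norm:
  fixes u :: "nat \<Rightarrow> 'a::topological_space \<Rightarrow>\<^sub>C 'b::real_normed_vector"
  assumes "compact S" "\<And>n. u n \<in> S" "\<And>x. (\<lambda>n. apply_bcontfun (u n) x) \<longlonglongrightarrow> 0" "\<epsilon> > 0"
  shows "\<exists>n. norm (u n) < \<epsilon>"
proof -
  obtain l \<sigma> where "strict_mono \<sigma>" and lim: "(u \<circ> \<sigma>) \<longlonglongrightarrow> l"
    using compact_imp_seq_compact[OF assms(1)] assms(2) unfolding seq_compact_def by metis
  have "l = 0"
  proof (rule bcontfun_eqI)
    fix x
    have "(\<lambda>k. apply_bcontfun ((u \<circ> \<sigma>) k) x) \<longlonglongrightarrow> apply_bcontfun l x"
      using lim unfolding tendsto_iff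
      by (auto elim!: eventually_mono intro: le_less_trans[OF dist_bounded])
    moreover have "(\<lambda>k. apply_bcontfun ((u \<circ> \<sigma>) k) x) \<longlonglongrightarrow> 0"
      using LIMSEQ_subseq_LIMSEQ[OF assms(3) \<open>strict_mono \<sigma>\<close>] by (simp add: o_def)
    ultimately show "apply_bcontfun l x = apply_bcontfun 0 x" by (simp add: LIMSEQ_unique)
  qed
  then obtain k where "dist ((u \<circ> \<sigma>) k) 0 < \<epsilon>"
    using lim assms(4) unfolding tendsto_iff eventually_sequentially by blast
  then show ?thesis by auto
qed

context evolution_with_green
begin

lemma evol_outer_ramp_tendsto_0:
  assumes "s \<in> I" "s < t"
  shows "(\<lambda>n. G t s (outer_ramp n) x) \<longlonglongrightarrow> 0"
proof -
  have bcont: "bcont (outer_ramp n)" for n by (simp add: bcont_iff_bcontfun outer_ramp_bcontfun)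
  have "(\<lambda>n. \<integral>y. g t s x y * outer_ramp n y \<partial>lborel) \<longlonglongrightarrow> (\<integral>y. g t s x y * 0 \<partial>lborel)"
  proof (rule integral_dominated_convergence[where w = "\<lambda>y. g t s x y * 1"])
    show "integrable lborel (\<lambda>y. g t s x y * 1)" by (rule integrable_green[OF assms bcont_const])
    show "(\<lambda>y. g t s x y * outer_ramp n y) \<in> borel_measurable lborel" for n
      using integrable_green[OF assms bcont] by blast
    show "AE y in lborel. (\<lambda>n. g t s x y * outer_ramp n y) \<longlonglongrightarrow> g t s x y * 0"
      using outer_ramp_eventually_0 by (intro AE_I2 tendsto_eventually) (auto elim: eventually_mono)
    show "AE y in lborel. norm (g t s x y * outer_ramp n y) \<le> g t s x y * 1" for n
    proof (rule AE_I2)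
      fix y
      have "0 < g t s x y" by (rule green_pos[OF assms])
      then show "norm (g t s x y * outer_ramp n y) \<le> g t s x y * 1"
        using outer_ramp_bounds[of n y] by (simp add: abs_mult mult_left_le)
    qed
  qed simp
  then show ?thesis by (simp add: evol_eq_integral[OF assms bcont])
qed

lemma gmeas_outside_ball_le_evol_outer_ramp:
  assumes "s \<in> I" "s < t"
  shows "gmeas g t s x (UNIV - ball 0 (real n + 1)) \<le> G t s (outer_ramp n) x"
proof -
  have bcont: "bcont (outer_ramp n)" by (simp add: bcont_iff_bcontfun outer_ramp_bcontfun)
  have "indicator (UNIV - ball 0 (real n + 1)) y * g t s x y \<le> g t s x y * outer_ramp n y" for y
    using mult_right_mono[OF indicator_outside_ball_le_outer_ramp less_imp_le[OF green_pos[OF assms]]]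
    by (simp add: mult.commute)
  then have "gmeas g t s x (UNIV - ball 0 (real n + 1)) \<le> (\<integral>y. g t s x y * outer_ramp n y \<partial>lborel)"
    unfolding gmeas_eq_integral
    by (intro integral_mono integrable_green_indicator[OF assms] integrable_green[OF assms bcont]) auto
  then show ?thesis by (simp add: evol_eq_integral[OF assms bcont])
qed

lemma tight_if_compact_evol_op:
  assumes "s \<in> I" "s < t" "compact_op (evol_op \<alpha> q b c t s)" "\<epsilon> > 0"
  shows "\<exists>R>0. \<forall>x. gmeas g t s x (UNIV - ball 0 R) \<le> \<epsilon>"
proof -
  define \<psi> :: "nat \<Rightarrow> (real^'n) \<Rightarrow>\<^sub>C real" where "\<psi> n = Bcontfun (outer_ramp n)" for n
  have \<psi>: "apply_bcontfun (\<psi> n) = outer_ramp n" for n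
    unfolding \<psi>_def by (rule Bcontfun_inverse[OF outer_ramp_bcontfun])
  have evol_op_\<psi>: "apply_bcontfun (evol_op \<alpha> q b c t s (\<psi> n)) = G t s (outer_ramp n)" for n
    using evol_op_apply[OF assms(1) less_imp_le[OF assms(2)]] by (simp add: \<psi>)
  have "\<psi> n \<in> cball 0 1" for n
    unfolding mem_cball_0 by (rule norm_bound) (simp add: \<psi> outer_ramp_def)
  then have in_closure: "evol_op \<alpha> q b c t s (\<psi> n) \<in> closure (evol_op \<alpha> q b c t s ` cball 0 1)" for n
    by (meson closure_subset image_eqI subsetD)
  have pointwise: "(\<lambda>n. apply_bcontfun (evol_op \<alpha> q b c t s (\<psi> n)) x) \<longlonglongrightarrow> 0" for x
    using evol_outer_ramp_tendsto_0[OF assms(1,2)] by (simp add: evol_op_\<psi>)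
  obtain n where small: "norm (evol_op \<alpha> q b c t s (\<psi> n)) < \<epsilon>"
    using compact_pointwise_null_has_small_norm[OF assms(3)[unfolded compact_op_def] in_closure pointwise assms(4)]
    by blast
  have "gmeas g t s x (UNIV - ball 0 (real n + 1)) \<le> \<epsilon>" for x
  proof -
    have "gmeas g t s x (UNIV - ball 0 (real n + 1)) \<le> apply_bcontfun (evol_op \<alpha> q b c t s (\<psi> n)) x"
      using gmeas_outside_ball_le_evol_outer_ramp[OF assms(1,2)] by (simp add: evol_op_\<psi>)
    also have "\<dots> \<le> norm (evol_op \<alpha> q b c t s (\<psi> n))" using norm_bounded by (smt (verit) real_norm_def)
    finally show ?thesis using small by linarith
  qed
  then show ?thesis by (intro exI[of _ "real n + 1"]) auto
qed

end

theorem proposition4p1: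
  fixes I J :: "real set" and \<alpha> :: real
    and q :: "real \<Rightarrow> real^'n::finite \<Rightarrow> real^'n^'n"
    and b :: "real \<Rightarrow> real^'n \<Rightarrow> real^'n"
    and c :: "real \<Rightarrow> real^'n \<Rightarrow> real"
    and g :: "real \<Rightarrow> real \<Rightarrow> real^'n \<Rightarrow> real^'n \<Rightarrow> real"
  assumes "standing I \<alpha> q b c"
    and "well_posed I \<alpha> q b c"
    and "green_fn I \<alpha> q b c g"
    and "is_interval J" and "J \<subseteq> I"
  shows "(\<forall>t\<in>J. \<forall>s\<in>J. s < t \<longrightarrow> compact_op (evol_op \<alpha> q b c t s))
     \<longleftrightarrow> (\<forall>t\<in>J. \<forall>s\<in>J. s < t \<longrightarrow>
            (\<forall>\<epsilon>>0. \<exists>R>0. \<forall>x. gmeas g t s x (UNIV - ball 0 R) \<le> \<epsilon>))"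
proof -
  interpret evolution_with_green I \<alpha> q b c g using assms(2,3) by unfold_locales
  have "\<alpha> > 0" using assms(1) unfolding standing_def by linarith
  show ?thesis
  proof (intro iffI ballI impI allI)
    fix t s \<epsilon> :: real
    assume "\<forall>t\<in>J. \<forall>s\<in>J. s < t \<longrightarrow> compact_op (evol_op \<alpha> q b c t s)"
      and "t \<in> J" "s \<in> J" "s < t" "\<epsilon> > 0"
    then show "\<exists>R>0. \<forall>x. gmeas g t s x (UNIV - ball 0 R) \<le> \<epsilon>"
      using assms(5) by (intro tight_if_compact_evol_op) auto
  next
    fix t s :: real
    assume tight: "\<forall>t\<in>J. \<forall>s\<in>J. s < t \<longrightarrow> (\<forall>\<epsilon>>0. \<exists>R>0. \<forall>x. gmeas g t s x (UNIV - ball 0 R) \<le> \<epsilon>)"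
      and "t \<in> J" "s \<in> J" "s < t"
    define r where "r = (s + t) / 2"
    have "s < r" "r < t" using \<open>s < t\<close> by (simp_all add: r_def)
    moreover have "r \<in> J"
      using mem_is_interval_1_I[OF assms(4) \<open>s \<in> J\<close> \<open>t \<in> J\<close>] \<open>s < r\<close> \<open>r < t\<close> by simp
    ultimately show "compact_op (evol_op \<alpha> q b c t s)"
      using tight \<open>s \<in> J\<close> \<open>t \<in> J\<close> assms(5) by (intro compact_evol_op_if_tight[OF \<open>\<alpha> > 0\<close>]) auto
  qed
qed

end
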